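(* Let $q=p^e$ with $p>3$ prime and $e\ge1$, and let $n\ge 1$ be an integer. If $D_{n,3}(1,x)$ is a permutation polynomial of $\mathbb{F}_q$, then $n\equiv 2\pmod 6$.
   Context: For $n\ge 1$ and $a\in\mathbb{F}_q$, $D_{n,3}(a,x)=\sum_{i=0}^{\lfloor n/2\rfloor}\frac{n-3i}{n-i}\binom{n-i}{i}(-x)^i a^{n-2i}\in\mathbb{F}_q[x]$, where each coefficient $\frac{n-3i}{n-i}\binom{n-i}{i}$ is an integer read modulo $p$; and $D_{0,3}(a,x)=-1$. A polynomial $g\in\mathbb{F}_q[x]$ is a permutation polynomial of $\mathbb{F}_q$ if $c\mapsto g(c)$ is a bijection $\mathbb{F}_q\to\mathbb{F}_q$. *)

theory Defs
  imports "HOL-Computational_Algebra.Computational_Algebra"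
begin

text \<open>Integer coefficient (n-3i)/(n-i) * binom(n-i,i); the division is exact for i \<le> n/2, n \<ge> 1.\<close>
definition D3_coeff :: "nat \<Rightarrow> nat \<Rightarrow> int" where
  "D3_coeff n i = ((int n - 3 * int i) * int ((n - i) choose i)) div int (n - i)"

definition D3 :: "nat \<Rightarrow> 'a::comm_ring_1 \<Rightarrow> 'a poly" where
  "D3 n a = (if n = 0 then - 1 else
     (\<Sum>i\<in>{0..n div 2}. monom (of_int (D3_coeff n i) * (- 1) ^ i * a ^ (n - 2 * i)) i))"

definition permutation_poly :: "'a::comm_ring_1 poly \<Rightarrow> bool" where
  "permutation_poly g \<longleftrightarrow> bij (poly g)"

end

theory Submission
  imports Defs "HOL-Number_Theory.Residues"
begin

text \<open>
  For \<open>1 \<le> i \<le> n/2\<close> the coefficient \<open>(n-3i)/(n-i) C(n-i,i)\<close> equals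
  \<open>C(n-i,i) - 2 C(n-i-1,i-1)\<close>, and Pascal's rule turns this into the recurrence
  \<open>d(n+2,x) = d(n+1,x) - x d(n,x)\<close> (for \<open>n \<ge> 2\<close>) for the integer values \<open>d(n,x) = D_{n,3}(1,x)\<close>.
  Consequently \<open>d(n,0) = 1\<close>, \<open>d(n,-2) = (-1)^(n+1)\<close>, and \<open>d(n,1)\<close> is 6-periodic with
  \<open>d(n,1) = -1\<close> for \<open>n \<equiv> 0, 4 (mod 6)\<close>. So for odd \<open>n\<close> the points \<open>0\<close> and \<open>-2\<close>, which are
  distinct as \<open>p \<noteq> 2\<close>, have the same image; for \<open>n \<equiv> 0, 4\<close> so do \<open>1\<close> and \<open>-2\<close>, distinct as
  \<open>p \<noteq> 3\<close>; and \<open>D_{1,3}(1,x) = 1\<close> is constant.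
\<close>

definition dickson3_coeff :: "nat \<Rightarrow> nat \<Rightarrow> int" where
  "dickson3_coeff n i =
     (if i = 0 then 1 else int ((n - i) choose i) - 2 * int ((n - i - 1) choose (i - 1)))"

definition dickson3_val :: "nat \<Rightarrow> int \<Rightarrow> int" where
  "dickson3_val n x = (\<Sum>i\<le>n. dickson3_coeff n i * (- x) ^ i)"

lemma D3_coeff_eq_dickson3_coeff:
  assumes "n \<ge> 1" "2 * i \<le> n"
  shows "D3_coeff n i = dickson3_coeff n i"
proof (cases "i = 0")
  case True
  then show ?thesis using assms by (simp add: D3_coeff_def dickson3_coeff_def)
next
  case False
  define m where "m = n - i"
  have "m > 0" using assms False by (simp add: m_def)
  have "i * (m choose i) = m * ((m - 1) choose (i - 1))"
    using times_binomial_minus1_eq[of i m] False by simp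
  then have "int i * int (m choose i) = int m * int ((m - 1) choose (i - 1))"
    by (metis of_nat_mult)
  moreover have "int n = int m + int i" using assms by (simp add: m_def)
  ultimately have "(int n - 3 * int i) * int (m choose i)
      = int m * (int (m choose i) - 2 * int ((m - 1) choose (i - 1)))"
    by (simp add: algebra_simps)
  then have "D3_coeff n i = (int m * (int (m choose i) - 2 * int ((m - 1) choose (i - 1)))) div int m"
    by (simp add: D3_coeff_def m_def)
  also have "\<dots> = int (m choose i) - 2 * int ((m - 1) choose (i - 1))"
    using \<open>m > 0\<close> by simp
  finally show ?thesis
    using False by (simp add: dickson3_coeff_def m_def)
qed

text \<open>Truncated subtraction makes \<open>dickson3_coeff 1 1 = -2\<close>; hence \<open>n \<ge> 2\<close> throughout.\<close>

lemma dickson3_coeff_eq_0: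
  assumes "n \<ge> 2" "2 * i > n"
  shows "dickson3_coeff n i = 0"
  using assms by (simp add: dickson3_coeff_def binomial_eq_0)

lemma dickson3_coeff_Suc_Suc:
  assumes "n \<ge> 2"
  shows "dickson3_coeff (n + 2) (Suc i) = dickson3_coeff (n + 1) (Suc i) + dickson3_coeff n i"
proof (cases i)
  case 0
  then show ?thesis using assms by (simp add: dickson3_coeff_def)
next
  case (Suc j)
  have pascal: "m \<ge> 1 \<Longrightarrow> m choose Suc k = ((m - 1) choose k) + ((m - 1) choose Suc k)"
    for m k :: nat
    by (cases m) auto
  have pascal_outer: "(n - j) choose (j + 2) = ((n - j - 1) choose (j + 2)) + ((n - j - 1) choose (j + 1))"
    using pascal[of "n - j" "j + 1"] by (cases "j < n") auto
  have pascal_inner: "(n - j - 1) choose (j + 1) = ((n - j - 2) choose (j + 1)) + ((n - j - 2) choose j)"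
    using pascal[of "n - j - 1" j] assms by (cases "j + 1 < n") (auto simp: diff_diff_add)
  show ?thesis
    using arg_cong[OF pascal_outer, of int] arg_cong[OF pascal_inner, of int] Suc
    by (simp add: dickson3_coeff_def diff_diff_add algebra_simps numeral_2_eq_2)
qed

lemma dickson3_val_Suc_Suc:
  assumes "n \<ge> 2"
  shows "dickson3_val (n + 2) x = dickson3_val (n + 1) x - x * dickson3_val n x"
proof -
  let ?c = dickson3_coeff and ?y = "- x"
  have shift: "dickson3_val m x = 1 + (\<Sum>i<m. ?c m (Suc i) * ?y ^ Suc i)" for m
    unfolding dickson3_val_def sum.atMost_shift by (simp add: dickson3_coeff_def)
  have top: "?c (n + 1) (Suc (n + 1)) = 0" "?c n (Suc n) = 0"
    using assms by (auto intro: dickson3_coeff_eq_0)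
  have "dickson3_val (n + 2) x
      = 1 + (\<Sum>i<n + 2. ?c (n + 1) (Suc i) * ?y ^ Suc i) + (\<Sum>i<n + 2. ?c n i * ?y ^ Suc i)"
    unfolding shift dickson3_coeff_Suc_Suc[OF assms] distrib_right sum.distrib by simp
  also have "(\<Sum>i<n + 2. ?c (n + 1) (Suc i) * ?y ^ Suc i)
      = (\<Sum>i<n + 1. ?c (n + 1) (Suc i) * ?y ^ Suc i)"
    using top(1) by (simp only: add_2_eq_Suc' sum.lessThan_Suc) simp
  also have "(\<Sum>i<n + 2. ?c n i * ?y ^ Suc i) = (\<Sum>i\<le>n. ?c n i * ?y ^ Suc i)"
    using top(2) by (simp only: add_2_eq_Suc' sum.lessThan_Suc lessThan_Suc_atMost) simp
  also have "\<dots> = ?y * dickson3_val n x"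
    by (simp add: dickson3_val_def sum_distrib_left algebra_simps)
  finally show ?thesis using shift[of "n + 1"] by simp
qed

lemma dickson3_val_at_0: "dickson3_val n 0 = 1"
  unfolding dickson3_val_def sum.atMost_shift by (simp add: dickson3_coeff_def)

lemma dickson3_val_at_neg2:
  assumes "n \<ge> 2"
  shows "dickson3_val n (- 2) = (- 1) ^ (n + 1)"
proof -
  have "dickson3_val n (- 2) = (- 1) ^ (n + 1) \<and> dickson3_val (Suc n) (- 2) = (- 1) ^ (n + 2)"
    using assms
  proof (induction n rule: dec_induct)
    case base
    then show ?case by (simp add: dickson3_val_def dickson3_coeff_def eval_nat_numeral)
  next
    case (step n)
    then show ?case using dickson3_val_Suc_Suc[OF step(1), of "- 2"] by simp
  qed
  then show ?thesis ..
qed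

lemma dickson3_val_at_1_periodic:
  assumes "n \<ge> 2"
  shows "dickson3_val (n + 6 * k) 1 = dickson3_val n 1"
proof -
  have anti: "dickson3_val (m + 3) 1 = - dickson3_val m 1" if "m \<ge> 2" for m
    using dickson3_val_Suc_Suc[of m 1] dickson3_val_Suc_Suc[of "m + 1" 1] that
    by (simp add: eval_nat_numeral)
  show ?thesis
  proof (induction k)
    case (Suc k)
    have "dickson3_val (n + 6 * k + 3 + 3) 1 = - dickson3_val (n + 6 * k + 3) 1"
      by (rule anti) (use assms in simp)
    also have "\<dots> = dickson3_val (n + 6 * k) 1"
      using anti[of "n + 6 * k"] assms by simp
    finally show ?case
      using Suc.IH by (simp add: ac_simps)
  qed simp
qed

lemma dickson3_val_at_1_eq_neg1:
  assumes "n \<ge> 2" "n mod 6 = 0 \<or> n mod 6 = 4"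
  shows "dickson3_val n 1 = - 1"
proof -
  have "n = 4 + 6 * (n div 6) \<or> n = 6 + 6 * (n div 6 - 1)"
    using assms by presburger
  then obtain r k where r: "r = 4 \<or> r = 6" and n: "n = r + 6 * k"
    by blast
  have "dickson3_val r 1 = - 1"
    using r by (auto simp: dickson3_val_def dickson3_coeff_def eval_nat_numeral)
  then show ?thesis
    using r by (auto simp: n dickson3_val_at_1_periodic)
qed

lemma poly_D3_one_of_int:
  assumes "n \<ge> 2"
  shows "poly (D3 n (1::'a::comm_ring_1)) (of_int x) = of_int (dickson3_val n x)"
proof -
  have "poly (D3 n (1::'a)) (of_int x)
      = (\<Sum>i\<in>{0..n div 2}. of_int (D3_coeff n i) * (- 1) ^ i * (of_int x) ^ i)"
    using assms by (simp add: D3_def poly_sum poly_monom)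
  also have "\<dots> = of_int (\<Sum>i\<in>{0..n div 2}. dickson3_coeff n i * (- x) ^ i)"
    using assms unfolding of_int_sum
    by (intro sum.cong) (auto simp: D3_coeff_eq_dickson3_coeff power_minus[of "of_int x"] mult.assoc)
  also have "(\<Sum>i\<in>{0..n div 2}. dickson3_coeff n i * (- x) ^ i) = dickson3_val n x"
    unfolding dickson3_val_def
    by (rule sum.mono_neutral_left) (use assms dickson3_coeff_eq_0 in auto)
  finally show ?thesis .
qed

lemma poly_D3_1_one: "poly (D3 1 (1::'a::comm_ring_1)) x = 1"
  by (simp add: D3_def D3_coeff_def poly_monom)

lemma CHAR_eq_prime_of_card:
  assumes "prime p" "e \<ge> 1" "card (UNIV :: 'a::{finite,field} set) = p ^ e"
  shows "CHAR('a) = p"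
proof -
  have "prime CHAR('a)"
    by (rule prime_CHAR_semidom, rule finite_imp_CHAR_pos) simp
  moreover have "CHAR('a) dvd p ^ e"
    using CHAR_dvd_CARD[where 'a = 'a] assms(3) by simp
  ultimately show ?thesis
    using assms(1) by (meson prime_dvd_power primes_dvd_imp_eq)
qed

lemma of_nat_neq_0_below_CHAR:
  assumes "0 < k" "k < CHAR('a::semiring_1)"
  shows "(of_nat k :: 'a) \<noteq> 0"
  using assms by (auto simp: of_nat_eq_0_iff_char_dvd dest: dvd_imp_le)

theorem theorem3p1:
  fixes p e n :: nat
  assumes "prime p" and "p > 3" and "e \<ge> 1"
    and "card (UNIV :: 'a set) = p ^ e"
    and "n \<ge> 1"
    and "permutation_poly (D3 n (1::'a::{finite,field}))"
  shows "n mod 6 = 2"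
proof (rule ccontr)
  assume "n mod 6 \<noteq> 2"
  have inj: "inj (poly (D3 n (1::'a)))"
    using assms(6) by (simp add: permutation_poly_def bij_is_inj)
  have char: "CHAR('a) = p" using CHAR_eq_prime_of_card assms(1,3,4) .
  have "n \<noteq> 1"
  proof
    assume "n = 1"
    then have "poly (D3 n (1::'a)) 0 = poly (D3 n 1) 1" by (simp only: poly_D3_1_one)
    then show False using injD[OF inj] by fastforce
  qed
  then have n: "n \<ge> 2" using assms(5) by simp
  have collide: "(of_int a :: 'a) = of_int b"
    if "dickson3_val n a = dickson3_val n b" for a b
    using injD[OF inj] that by (simp add: poly_D3_one_of_int[OF n])
  show False
  proof (cases "odd n")
    case True
    then have "(of_int (- 2) :: 'a) = of_int 0"
      by (intro collide) (simp add: dickson3_val_at_neg2[OF n] dickson3_val_at_0)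
    then show False using of_nat_neq_0_below_CHAR[where 'a = 'a, of 2] char assms(2) by simp
  next
    case False
    with \<open>n mod 6 \<noteq> 2\<close> have "n mod 6 = 0 \<or> n mod 6 = 4" by presburger
    then have "(of_int (- 2) :: 'a) = of_int 1"
      using False by (intro collide) (simp add: dickson3_val_at_neg2[OF n] dickson3_val_at_1_eq_neg1[OF n])
    then have "(of_nat 3 :: 'a) = 0" by (simp add: algebra_simps)
    then show False using of_nat_neq_0_below_CHAR[where 'a = 'a, of 3] char assms(2) by simp
  qed
qed

end
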